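(* Let $n$ be a positive integer, let $u:2^{[n]}\to\mathbb{R}_{\ge 0}$ be a normalized ($u(\emptyset)=0$), monotone, submodular and second-order supermodular set function, and let $c:2^{[n]}\to\mathbb{R}_{\ge 0}$ be the modular set function $c(S)=\sum_{i\in S}c_i$ with $c_1,\dots,c_n>0$. Let $(l_1,\dots,l_n)$ be a locally optimal permutation of $[n]$ (in the sense defined in the context) and let $(o_1,\dots,o_n)$ be an optimal permutation for Min-Sum Submodular Cover on $(u,c)$. Write $L_j=\{l_1,\dots,l_j\}$ and $O_i=\{o_1,\dots,o_i\}$ (with $L_0=O_0=\emptyset$), and $c(o_i)=c(\{o_i\})$. For $i,j\in[n]$ define $$b_{ij}=u(o_i\mid O_{i-1}\cup L_{j-1})-u(o_i\mid O_{i-1}\cup L_{j-1}\cup\{l_j\}),$$ which also equals $u(l_j\mid O_{i-1}\cup L_{j-1})-u(l_j\mid O_{i-1}\cup L_{j-1}\cup\{o_i\})$. Then for all $i,j\in[n]$, $$\sum_{r=j}^n c(L_r)\sum_{s=1}^n b_{sr}\;\le\;[c(o_i)+c(L_{j-1})]\sum_{r=j}^n b_{ir}+\sum_{r=j}^n [c(o_i)+c(L_r)]\sum_{\substack{s=1\\ s\ne i}}^n b_{sr}.$$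
   Context: Notation: $f(e\mid S):=f(S\cup\{e\})-f(S)$. A set function $f$ on $2^{[n]}$ is monotone if $f(S\cup\{i\})\ge f(S)$, submodular if $f(i\mid S)\ge f(i\mid S\cup\{j\})$, and second-order supermodular if $f(i\mid S)-f(i\mid S\cup\{j\})\ge f(i\mid S\cup\{k\})-f(i\mid S\cup\{k,j\})$, for all $S\subseteq[n]$ and $i,j,k\in[n]\setminus S$. Min-Sum Submodular Cover on $(u,c)$: minimize over permutations of $[n]$ the objective $\sum_{i=1}^n c(S_i)(u(S_i)-u(S_{i-1}))$, $S_i$ the set of the first $i$ elements, $S_0=\emptyset$. Pseudo-neighbors and local optimality: a pseudo-neighbor of a permutation $\pi$ is a sequence of length $n+1$ obtained by taking the element at some position $i$ of $\pi$ and inserting a second copy of it at some position $j<i$. Its objective value is $\sum_{k=1}^{n+1} c'(S_k)[u(S_k)-u(S_{k-1})]$, where $S_k$ is its prefix of length $k$, $u(S_k)$ is $u$ evaluated on the set of distinct elements of $S_k$, and $c'(S_k)=\sum_{t=1}^k c(\{s_t\})$ with $s_t$ the element in position $t$ (so both copies are charged when both lie in the prefix). A permutation is locally optimal if no pseudo-neighbor has strictly lower objective value than it. *)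

theory Defs
  imports Complex_Main
begin

text \<open>Ground set [n] = {1..n}. Set functions are functions nat set => real, with
  all conditions imposed on subsets of [n]. Permutations are lists.\<close>

definition marg :: "(nat set \<Rightarrow> real) \<Rightarrow> nat \<Rightarrow> nat set \<Rightarrow> real" where
  "marg f e S = f (insert e S) - f S"

definition monotone_sf :: "nat \<Rightarrow> (nat set \<Rightarrow> real) \<Rightarrow> bool" where
  "monotone_sf n f \<longleftrightarrow> (\<forall>S i. S \<subseteq> {1..n} \<and> i \<in> {1..n} - S \<longrightarrow> f (insert i S) \<ge> f S)"

definition submodular_sf :: "nat \<Rightarrow> (nat set \<Rightarrow> real) \<Rightarrow> bool" where
  "submodular_sf n f \<longleftrightarrow> (\<forall>S i j. S \<subseteq> {1..n} \<and> i \<in> {1..n} - S \<and> j \<in> {1..n} - S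
      \<longrightarrow> marg f i S \<ge> marg f i (insert j S))"

definition second_order_supermodular :: "nat \<Rightarrow> (nat set \<Rightarrow> real) \<Rightarrow> bool" where
  "second_order_supermodular n f \<longleftrightarrow> (\<forall>S i j k. S \<subseteq> {1..n} \<and> i \<in> {1..n} - S
      \<and> j \<in> {1..n} - S \<and> k \<in> {1..n} - S
      \<longrightarrow> marg f i S - marg f i (insert j S) \<ge> marg f i (insert k S) - marg f i (insert k (insert j S)))"

text \<open>A permutation of [n], as a list (position t holds element xs!(t-1)).\<close>
definition is_perm :: "nat \<Rightarrow> nat list \<Rightarrow> bool" where
  "is_perm n xs \<longleftrightarrow> distinct xs \<and> set xs = {1..n}"

text \<open>Objective value of a sequence (possibly with repeated elements), with modular cost
  given by weights cw: c'(S_k) sums the weights of all entries of the length-k prefix.\<close>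
definition seq_obj :: "(nat set \<Rightarrow> real) \<Rightarrow> (nat \<Rightarrow> real) \<Rightarrow> nat list \<Rightarrow> real" where
  "seq_obj u cw xs = (\<Sum>k=1..length xs. sum_list (map cw (take k xs)) *
       (u (set (take k xs)) - u (set (take (k - 1) xs))))"

definition pseudo_neighbor :: "nat list \<Rightarrow> nat \<Rightarrow> nat \<Rightarrow> nat list" where
  "pseudo_neighbor xs i j = take j xs @ [xs ! i] @ drop j xs"

definition locally_optimal :: "(nat set \<Rightarrow> real) \<Rightarrow> (nat \<Rightarrow> real) \<Rightarrow> nat list \<Rightarrow> bool" where
  "locally_optimal u cw xs \<longleftrightarrow>
     (\<forall>i j. i < length xs \<and> j < i \<longrightarrow> seq_obj u cw xs \<le> seq_obj u cw (pseudo_neighbor xs i j))"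

definition optimal_perm :: "nat \<Rightarrow> (nat set \<Rightarrow> real) \<Rightarrow> (nat \<Rightarrow> real) \<Rightarrow> nat list \<Rightarrow> bool" where
  "optimal_perm n u cw xs \<longleftrightarrow> is_perm n xs \<and>
     (\<forall>ys. is_perm n ys \<longrightarrow> seq_obj u cw xs \<le> seq_obj u cw ys)"

end

theory Submission
  imports Defs
begin

text \<open>Fix i, j and put x = o_i. Summed over s, the b_sr telescope to the increment
  u(L_r) - u(L_(r-1)). Inserting a copy of x in front of position j of l gives a
  pseudo-neighbour, and comparing objectives bounds the left-hand side by the right-hand side
  with b_ir replaced by a_r = u(x | L_(r-1)) - u(x | L_r); if x is among the first j entries
  of l, monotonicity gives the same bound. Second-order supermodularity gives b_ir \<le> a_r, and
  a_r enters the right-hand side with weight c(L_(j-1)) - c(L_r) \<le> 0, so lowering it to b_ir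
  keeps the bound.\<close>

lemma is_permD:
  assumes "is_perm n xs"
  shows "distinct xs" "set xs = {1..n}" "length xs = n"
  using assms by (auto simp: is_perm_def dest: distinct_card)

lemma set_take_eq_insert_nth:
  assumes "0 < r" "r \<le> length xs"
  shows "set (take r xs) = insert (xs ! (r - 1)) (set (take (r - 1) xs))"
  using assms take_Suc_conv_app_nth[of "r - 1" xs] by (cases r) auto

lemma antitone_subset_if_insert_antitone:
  fixes g :: "'a set \<Rightarrow> 'b::preorder"
  assumes step: "\<And>S k. S \<subseteq> A \<Longrightarrow> k \<in> A \<Longrightarrow> g (insert k S) \<le> g S"
    and "finite A" "S \<subseteq> T" "T \<subseteq> A"
  shows "g T \<le> g S"
proof -
  have "S \<subseteq> A" using assms(3,4) by (rule order_trans)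
  have "g (S \<union> F) \<le> g S" if "finite F" "F \<subseteq> A" for F
    using that
  proof (induction F rule: finite_subset_induct')
    case (insert k F)
    have "g (insert k (S \<union> F)) \<le> g (S \<union> F)"
      using step[of "S \<union> F" k] insert.hyps \<open>S \<subseteq> A\<close> by simp
    with insert.IH show ?case by (simp add: order_trans)
  qed simp
  moreover have "finite (T - S)" "T - S \<subseteq> A"
    using assms(2,4) finite_subset by blast+
  moreover have "S \<union> (T - S) = T" using assms(3) by blast
  ultimately show ?thesis by metis
qed

lemma monotone_sf_subset:
  assumes "monotone_sf n u" "T \<subseteq> {1..n}" "S \<subseteq> T"
  shows "u S \<le> u T"
proof -
  have "- u (insert k S) \<le> - u S" if "S \<subseteq> {1..n}" "k \<in> {1..n}" for S k
    using assms(1) that by (cases "k \<in> S") (auto simp: monotone_sf_def insert_absorb)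
  then have "- u T \<le> - u S"
    using antitone_subset_if_insert_antitone[of "{1..n}" "\<lambda>S. - u S"] assms(2,3) by blast
  then show ?thesis by simp
qed

text \<open>The paper's b_ij is second_diff u o_i l_j (O_(i-1) \<union> L_(j-1)).\<close>

definition second_diff :: "(nat set \<Rightarrow> real) \<Rightarrow> nat \<Rightarrow> nat \<Rightarrow> nat set \<Rightarrow> real" where
  "second_diff u x y S = marg u x S - marg u x (insert y S)"

lemma second_diff_insert_le:
  assumes "second_order_supermodular n u" "S \<subseteq> {1..n}"
    and "x \<in> {1..n}" "y \<in> {1..n}" "k \<in> {1..n}"
  shows "second_diff u x y (insert k S) \<le> second_diff u x y S"
proof (cases "k \<in> S \<or> x \<in> S \<or> y \<in> S")
  case True
  then show ?thesis
    by (elim disjE) (simp_all add: second_diff_def marg_def insert_absorb)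
next
  case False
  then show ?thesis
    using assms(1)[unfolded second_order_supermodular_def, rule_format, of S x y k] assms(2-5)
    by (simp add: second_diff_def insert_commute)
qed

lemma second_diff_antimono:
  assumes "second_order_supermodular n u" "T \<subseteq> {1..n}" "S \<subseteq> T"
    and "x \<in> {1..n}" "y \<in> {1..n}"
  shows "second_diff u x y T \<le> second_diff u x y S"
  using antitone_subset_if_insert_antitone[of "{1..n}" "second_diff u x y"]
    second_diff_insert_le[OF assms(1) _ assms(4,5)] assms(2,3) by blast

lemma second_diff_commute: "second_diff u x y S = second_diff u y x S"
  by (simp add: second_diff_def marg_def insert_commute)

lemma sum_second_diff_prefixes:
  assumes "1 \<le> j" "j \<le> Suc m" "m \<le> length xs"
  shows "(\<Sum>s=j..m. second_diff u (xs ! (s - 1)) y (set (take (s - 1) xs) \<union> A))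
    = marg u y (set (take (j - 1) xs) \<union> A) - marg u y (set (take m xs) \<union> A)"
proof -
  define f where "f s = marg u y (set (take s xs) \<union> A)" for s
  have "second_diff u (xs ! (s - 1)) y (set (take (s - 1) xs) \<union> A) = f (s - 1) - f s"
    if "s \<in> {j..m}" for s
  proof -
    have "set (take s xs) = insert (xs ! (s - 1)) (set (take (s - 1) xs))"
      using that assms by (intro set_take_eq_insert_nth) auto
    then show ?thesis
      unfolding second_diff_commute[of u "xs ! (s - 1)"] by (simp add: second_diff_def f_def)
  qed
  then have "(\<Sum>s=j..m. second_diff u (xs ! (s - 1)) y (set (take (s - 1) xs) \<union> A))
      = - (\<Sum>s=Suc (j - 1)..m. f s - f (s - 1))"
    using assms(1) by (simp add: sum_negf[symmetric])
  also have "\<dots> = f (j - 1) - f m"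
    using sum_telescope''[of "j - 1" m f] assms by simp
  finally show ?thesis by (simp add: f_def)
qed

lemma sum_second_diff_perm_prefixes:
  assumes "is_perm n ys" "is_perm n xs" "r \<in> {1..n}"
  shows "(\<Sum>s=1..n. second_diff u (ys ! (s - 1)) (xs ! (r - 1))
           (set (take (s - 1) ys) \<union> set (take (r - 1) xs)))
    = u (set (take r xs)) - u (set (take (r - 1) xs))"
proof -
  note len = is_permD(3)[OF assms(1)] is_permD(3)[OF assms(2)]
  have "xs ! (r - 1) \<in> set ys"
    using assms(3) len is_permD(2)[OF assms(1)] is_permD(2)[OF assms(2)] by (auto dest: nth_mem)
  then have "marg u (xs ! (r - 1)) (set ys \<union> set (take (r - 1) xs)) = 0"
    by (simp add: marg_def insert_absorb)
  moreover have "set (take r xs) = insert (xs ! (r - 1)) (set (take (r - 1) xs))"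
    using assms(3) len by (intro set_take_eq_insert_nth) auto
  ultimately show ?thesis
    using sum_second_diff_prefixes[of 1 n ys] len by (simp add: marg_def)
qed

lemma seq_obj_split:
  assumes "q \<le> length xs"
  shows "seq_obj u cw xs = seq_obj u cw (take q xs)
    + (\<Sum>k=Suc q..length xs. sum_list (map cw (take k xs))
         * (u (set (take k xs)) - u (set (take (k - 1) xs))))"
proof -
  have "{1..length xs} = {1..q} \<union> {Suc q..length xs}" using assms by auto
  moreover have "seq_obj u cw (take q xs) = (\<Sum>k=1..q. sum_list (map cw (take k xs))
         * (u (set (take k xs)) - u (set (take (k - 1) xs))))"
    unfolding seq_obj_def using assms by (intro sum.cong) (auto simp: min_def)
  ultimately show ?thesis
    unfolding seq_obj_def by (simp add: sum.union_disjoint)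
qed

lemma seq_obj_insert:
  assumes "q \<le> length xs"
  shows "seq_obj u cw (take q xs @ x # drop q xs) = seq_obj u cw (take q xs)
    + (cw x + sum_list (map cw (take q xs))) * marg u x (set (take q xs))
    + (\<Sum>r=Suc q..length xs. (cw x + sum_list (map cw (take r xs)))
         * (u (insert x (set (take r xs))) - u (insert x (set (take (r - 1) xs)))))"
proof -
  define ys where "ys = take q xs @ x # drop q xs"
  have take_ys: "take (Suc r) ys = take q xs @ x # take (r - q) (drop q xs)" if "q \<le> r" for r
    using assms that by (simp add: ys_def min_def Suc_diff_le)
  have set_take_ys: "set (take (Suc r) ys) = insert x (set (take r xs))"
    and sum_take_ys: "sum_list (map cw (take (Suc r) ys)) = cw x + sum_list (map cw (take r xs))"
    if "q \<le> r" for r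
    using that take_add[of q "r - q" xs] by (auto simp: take_ys)
  have "seq_obj u cw ys = seq_obj u cw (take q xs)
      + (\<Sum>k=Suc q..Suc (length xs). sum_list (map cw (take k ys))
           * (u (set (take k ys)) - u (set (take (k - 1) ys))))"
    using seq_obj_split[of q ys] assms by (simp add: ys_def)
  also have "(\<Sum>k=Suc q..Suc (length xs). sum_list (map cw (take k ys))
           * (u (set (take k ys)) - u (set (take (k - 1) ys))))
    = (\<Sum>r=q..length xs. sum_list (map cw (take (Suc r) ys))
           * (u (set (take (Suc r) ys)) - u (set (take r ys))))"
    unfolding sum.shift_bounds_cl_Suc_ivl by simp
  also have "\<dots> = (cw x + sum_list (map cw (take q xs))) * marg u x (set (take q xs))
    + (\<Sum>r=Suc q..length xs. (cw x + sum_list (map cw (take r xs)))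
         * (u (insert x (set (take r xs))) - u (insert x (set (take (r - 1) xs)))))"
  proof -
    have "take q ys = take q xs" using assms by (simp add: ys_def)
    moreover have "set (take r ys) = insert x (set (take (r - 1) xs))" if "Suc q \<le> r" for r
      using set_take_ys[of "r - 1"] that by simp
    ultimately show ?thesis
      using assms by (simp add: sum.atLeast_Suc_atMost set_take_ys sum_take_ys marg_def)
  qed
  finally show ?thesis by (simp add: ys_def add.assoc)
qed

lemma locally_optimal_insertion_bound:
  assumes "locally_optimal u cw xs" "p < length xs" "q < p"
  shows "(\<Sum>r=Suc q..length xs. sum_list (map cw (take r xs))
           * (u (set (take r xs)) - u (set (take (r - 1) xs))))
    \<le> (cw (xs ! p) + sum_list (map cw (take q xs))) * marg u (xs ! p) (set (take q xs))
      + (\<Sum>r=Suc q..length xs. (cw (xs ! p) + sum_list (map cw (take r xs)))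
           * (u (insert (xs ! p) (set (take r xs))) - u (insert (xs ! p) (set (take (r - 1) xs)))))"
proof -
  have "seq_obj u cw xs \<le> seq_obj u cw (take q xs @ xs ! p # drop q xs)"
    using assms unfolding locally_optimal_def pseudo_neighbor_def by auto
  then show ?thesis
    using assms(2,3) by (simp add: seq_obj_split[of q xs] seq_obj_insert)
qed

text \<open>No pseudo-neighbour inserts x in front of position j when x is among the first j
  entries; then the insertion bound holds by monotonicity alone.\<close>

lemma perm_insertion_bound_if_mem_prefix:
  assumes perm: "is_perm n xs" and mono: "monotone_sf n u"
    and cw_nonneg: "\<forall>i\<in>{1..n}. 0 \<le> cw i" and x: "x \<in> set (take j xs)" and j: "j \<in> {1..n}"
  shows "(\<Sum>r=j..n. sum cw (set (take r xs)) * (u (set (take r xs)) - u (set (take (r - 1) xs))))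
    \<le> (cw x + sum cw (set (take (j - 1) xs))) * marg u x (set (take (j - 1) xs))
      + (\<Sum>r=j..n. (cw x + sum cw (set (take r xs)))
           * (u (insert x (set (take r xs))) - u (insert x (set (take (r - 1) xs)))))"
proof -
  define L where "L r = set (take r xs)" for r
  have L_sub: "L r \<subseteq> {1..n}" for r
    using is_permD(2)[OF perm] by (auto simp: L_def dest: in_set_takeD)
  have u_L_mono: "u (L (r - 1)) \<le> u (L r)" for r
    using monotone_sf_subset[OF mono L_sub] by (simp add: L_def set_take_subset_set_take)
  have x_in_L: "x \<in> L r" if "j \<le> r" for r
    using x set_take_subset_set_take[OF that, of xs] by (auto simp: L_def)
  have "cw x \<ge> 0" using cw_nonneg x L_sub L_def by blast
  have tail_le: "sum cw (L r) * (u (L r) - u (L (r - 1)))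
      \<le> (cw x + sum cw (L r)) * (u (insert x (L r)) - u (insert x (L (r - 1))))"
    if "j < r" for r
  proof -
    have "insert x (L r) = L r" "insert x (L (r - 1)) = L (r - 1)"
      using x_in_L that by (auto simp: insert_absorb)
    with u_L_mono[of r] \<open>cw x \<ge> 0\<close> show ?thesis by (simp add: distrib_right)
  qed
  have head_le: "sum cw (L j) * (u (L j) - u (L (j - 1)))
      \<le> (cw x + sum cw (L (j - 1))) * marg u x (L (j - 1))
        + (cw x + sum cw (L j)) * (u (insert x (L j)) - u (insert x (L (j - 1))))"
  proof (cases "x \<in> L (j - 1)")
    case True
    with x_in_L[of j] u_L_mono[of j] \<open>cw x \<ge> 0\<close> show ?thesis
      by (simp add: marg_def insert_absorb distrib_right)
  next
    case False
    moreover have "L j = insert (xs ! (j - 1)) (L (j - 1))"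
      using j is_permD(3)[OF perm] by (simp add: L_def set_take_eq_insert_nth)
    ultimately have "L j = insert x (L (j - 1))"
      using x_in_L[of j] by auto
    with False show ?thesis
      by (simp add: marg_def insert_absorb L_def)
  qed
  have "(\<Sum>r=Suc j..n. sum cw (L r) * (u (L r) - u (L (r - 1))))
      \<le> (\<Sum>r=Suc j..n. (cw x + sum cw (L r)) * (u (insert x (L r)) - u (insert x (L (r - 1)))))"
    using tail_le by (intro sum_mono) simp
  with head_le j show ?thesis
    unfolding L_def[symmetric] by (simp add: sum.atLeast_Suc_atMost)
qed

lemma locally_optimal_perm_insertion_bound:
  assumes perm: "is_perm n xs" and "locally_optimal u cw xs" "monotone_sf n u"
    and cw_nonneg: "\<forall>i\<in>{1..n}. 0 \<le> cw i" and x: "x \<in> {1..n}" and j: "j \<in> {1..n}"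
  shows "(\<Sum>r=j..n. sum cw (set (take r xs)) * (u (set (take r xs)) - u (set (take (r - 1) xs))))
    \<le> (cw x + sum cw (set (take (j - 1) xs))) * marg u x (set (take (j - 1) xs))
      + (\<Sum>r=j..n. (cw x + sum cw (set (take r xs)))
           * (u (insert x (set (take r xs))) - u (insert x (set (take (r - 1) xs)))))"
proof -
  note len = is_permD(3)[OF perm]
  have cost: "sum_list (map cw (take r xs)) = sum cw (set (take r xs))" for r
    using is_permD(1)[OF perm] by (simp add: sum_list_distinct_conv_sum_set)
  obtain p where p: "p < n" "xs ! p = x"
    using x is_permD(2,3)[OF perm] by (metis in_set_conv_nth)
  show ?thesis
  proof (cases "j - 1 < p")
    case True
    have "Suc (j - 1) = j" "j - 1 < p" "p < length xs" using True j p len by auto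
    from locally_optimal_insertion_bound[OF assms(2) this(3,2)] this(1)
    show ?thesis unfolding cost p(2) len by simp
  next
    case False
    then have "p < j" using j by auto
    then have "x \<in> set (take j xs)"
      using nth_mem[of p "take j xs"] p len by simp
    with perm_insertion_bound_if_mem_prefix[OF perm assms(3) cw_nonneg _ j] show ?thesis
      by blast
  qed
qed

lemma locally_optimal_perm_insertion_bound_second_diff:
  assumes perm: "is_perm n xs" and "locally_optimal u cw xs" "monotone_sf n u"
    and "\<forall>i\<in>{1..n}. 0 \<le> cw i" and x: "x \<in> {1..n}" and j: "j \<in> {1..n}"
  shows "(\<Sum>r=j..n. sum cw (set (take r xs)) * (u (set (take r xs)) - u (set (take (r - 1) xs))))
    \<le> (cw x + sum cw (set (take (j - 1) xs)))
        * (\<Sum>r=j..n. second_diff u x (xs ! (r - 1)) (set (take (r - 1) xs)))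
      + (\<Sum>r=j..n. (cw x + sum cw (set (take r xs)))
          * (u (set (take r xs)) - u (set (take (r - 1) xs))
             - second_diff u x (xs ! (r - 1)) (set (take (r - 1) xs))))"
proof -
  note len = is_permD(3)[OF perm] and set_xs = is_permD(2)[OF perm]
  have L_insert: "set (take r xs) = insert (xs ! (r - 1)) (set (take (r - 1) xs))"
    if "r \<in> {j..n}" for r
    using that j len by (intro set_take_eq_insert_nth) auto
  have "marg u x (set (take n xs)) = 0"
    using x len set_xs by (simp add: marg_def insert_absorb)
  then have "(\<Sum>r=j..n. second_diff u x (xs ! (r - 1)) (set (take (r - 1) xs)))
      = marg u x (set (take (j - 1) xs))"
    using sum_second_diff_prefixes[of j n xs u x "{}"] j len
    unfolding second_diff_commute[of u x] by simp
  moreover have "u (insert x (set (take r xs))) - u (insert x (set (take (r - 1) xs)))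
      = u (set (take r xs)) - u (set (take (r - 1) xs))
        - second_diff u x (xs ! (r - 1)) (set (take (r - 1) xs))"
    if "r \<in> {j..n}" for r
    using L_insert[OF that] by (simp add: second_diff_def marg_def)
  ultimately show ?thesis
    using locally_optimal_perm_insertion_bound[OF assms] by simp
qed

lemma exchange_le:
  fixes a b d C :: "'i \<Rightarrow> real"
  assumes "\<forall>r\<in>I. b r \<le> a r" "\<forall>r\<in>I. C0 \<le> C r"
  shows "(w + C0) * sum a I + (\<Sum>r\<in>I. (w + C r) * (d r - a r))
    \<le> (w + C0) * sum b I + (\<Sum>r\<in>I. (w + C r) * (d r - b r))"
proof -
  have "(w + C0) * a r + (w + C r) * (d r - a r) \<le> (w + C0) * b r + (w + C r) * (d r - b r)"
    if "r \<in> I" for r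
  proof -
    have "0 \<le> (C r - C0) * (a r - b r)" using assms that by simp
    then show ?thesis by (simp add: algebra_simps)
  qed
  then have "(\<Sum>r\<in>I. (w + C0) * a r + (w + C r) * (d r - a r))
      \<le> (\<Sum>r\<in>I. (w + C0) * b r + (w + C r) * (d r - b r))"
    by (rule sum_mono)
  then show ?thesis by (simp add: sum.distrib sum_distrib_left)
qed

lemma locally_optimal_perm_exchange_bound:
  assumes perm: "is_perm n xs" and "locally_optimal u cw xs" "monotone_sf n u"
    and so: "second_order_supermodular n u" and cw_nonneg: "\<forall>i\<in>{1..n}. 0 \<le> cw i"
    and x: "x \<in> {1..n}" and S: "S \<subseteq> {1..n}" and j: "j \<in> {1..n}"
  shows "(\<Sum>r=j..n. sum cw (set (take r xs)) * (u (set (take r xs)) - u (set (take (r - 1) xs))))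
    \<le> (cw x + sum cw (set (take (j - 1) xs)))
        * (\<Sum>r=j..n. second_diff u x (xs ! (r - 1)) (S \<union> set (take (r - 1) xs)))
      + (\<Sum>r=j..n. (cw x + sum cw (set (take r xs)))
          * (u (set (take r xs)) - u (set (take (r - 1) xs))
             - second_diff u x (xs ! (r - 1)) (S \<union> set (take (r - 1) xs))))"
proof -
  note len = is_permD(3)[OF perm] and set_xs = is_permD(2)[OF perm]
  have L_sub: "set (take r xs) \<subseteq> {1..n}" for r
    using set_xs by (auto dest: in_set_takeD)
  have b_le_a: "\<forall>r\<in>{j..n}. second_diff u x (xs ! (r - 1)) (S \<union> set (take (r - 1) xs))
      \<le> second_diff u x (xs ! (r - 1)) (set (take (r - 1) xs))"
  proof
    fix r assume "r \<in> {j..n}"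
    then have "xs ! (r - 1) \<in> {1..n}" using j len set_xs by (auto dest: nth_mem)
    with x S L_sub show "second_diff u x (xs ! (r - 1)) (S \<union> set (take (r - 1) xs))
      \<le> second_diff u x (xs ! (r - 1)) (set (take (r - 1) xs))"
      by (intro second_diff_antimono[OF so]) auto
  qed
  have c_mono: "\<forall>r\<in>{j..n}. sum cw (set (take (j - 1) xs)) \<le> sum cw (set (take r xs))"
  proof
    fix r assume "r \<in> {j..n}"
    then have "set (take (j - 1) xs) \<subseteq> set (take r xs)"
      by (intro set_take_subset_set_take) auto
    with cw_nonneg L_sub show "sum cw (set (take (j - 1) xs)) \<le> sum cw (set (take r xs))"
      by (intro sum_mono2) auto
  qed
  show ?thesis
    using locally_optimal_perm_insertion_bound_second_diff[OF perm assms(2,3) cw_nonneg x j]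
    by (rule order_trans[OF _ exchange_le[OF b_le_a c_mono]])
qed

theorem lemma1:
  fixes n :: nat and u :: "nat set \<Rightarrow> real" and cw :: "nat \<Rightarrow> real"
    and l ol :: "nat list"
  assumes "n \<ge> 1"
    and "\<forall>S. S \<subseteq> {1..n} \<longrightarrow> u S \<ge> 0"
    and "u {} = 0"
    and "monotone_sf n u" and "submodular_sf n u" and "second_order_supermodular n u"
    and "\<forall>i\<in>{1..n}. cw i > 0"
    and "is_perm n l" and "locally_optimal u cw l"
    and "optimal_perm n u cw ol"
  shows "let c = (\<lambda>S. \<Sum>x\<in>S. cw x);
             L = (\<lambda>j. set (take j l));
             Os = (\<lambda>i. set (take i ol));
             b = (\<lambda>i j. marg u (ol ! (i - 1)) (Os (i - 1) \<union> L (j - 1))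
                        - marg u (ol ! (i - 1)) (Os (i - 1) \<union> L (j - 1) \<union> {l ! (j - 1)}))
         in \<forall>i\<in>{1..n}. \<forall>j\<in>{1..n}.
              (\<Sum>r=j..n. c (L r) * (\<Sum>s=1..n. b s r))
              \<le> (cw (ol ! (i - 1)) + c (L (j - 1))) * (\<Sum>r=j..n. b i r)
                + (\<Sum>r=j..n. (cw (ol ! (i - 1)) + c (L r)) * (\<Sum>s\<in>{1..n} - {i}. b s r))"
proof -
  have perm_l: "is_perm n l" and perm_ol: "is_perm n ol"
    using assms(8,10) by (auto simp: optimal_perm_def)
  have cw_nonneg: "\<forall>i\<in>{1..n}. 0 \<le> cw i"
    using assms(7) by (simp add: less_imp_le)
  define L where "L j = set (take j l)" for j
  define b where "b i j = second_diff u (ol ! (i - 1)) (l ! (j - 1))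
    (set (take (i - 1) ol) \<union> L (j - 1))" for i j
  have column: "(\<Sum>s=1..n. b s r) = u (L r) - u (L (r - 1))" if "r \<in> {1..n}" for r
    using sum_second_diff_perm_prefixes[OF perm_ol perm_l that] by (simp add: b_def L_def)
  have "(\<Sum>r=j..n. sum cw (L r) * (\<Sum>s=1..n. b s r))
      \<le> (cw (ol ! (i - 1)) + sum cw (L (j - 1))) * (\<Sum>r=j..n. b i r)
        + (\<Sum>r=j..n. (cw (ol ! (i - 1)) + sum cw (L r)) * (\<Sum>s\<in>{1..n} - {i}. b s r))"
    if i: "i \<in> {1..n}" and j: "j \<in> {1..n}" for i j
  proof -
    have "ol ! (i - 1) \<in> {1..n}" "set (take (i - 1) ol) \<subseteq> {1..n}"
      using i is_permD(2,3)[OF perm_ol] by (auto dest: nth_mem in_set_takeD)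
    note bound = locally_optimal_perm_exchange_bound[OF perm_l assms(9,4,6) cw_nonneg this j]
    have "(\<Sum>s\<in>{1..n} - {i}. b s r) = u (L r) - u (L (r - 1)) - b i r" if "r \<in> {j..n}" for r
      using column[of r] that i j by (simp add: sum_diff1)
    moreover have "(\<Sum>s=1..n. b s r) = u (L r) - u (L (r - 1))" if "r \<in> {j..n}" for r
      using column[of r] that j by simp
    ultimately show ?thesis
      using bound by (simp add: b_def L_def)
  qed
  then show ?thesis
    unfolding Let_def L_def b_def second_diff_def by (simp add: Un_insert_right)
qed

end
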